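(* Let $M$ be a matroid on $S$ and $N$ a matroid on $T$ with $S\cap T=\emptyset$, and let $L=M\mathbin{\Box} N$. A subset $A\neq S$ of $S\cup T$ is a cyclic flat of $L$ if and only if either $A\subseteq S$ and $A$ is a cyclic flat of $M$, or $A=S\cup B$ where $B$ is a nonempty cyclic flat of $N$. The set $S$ is a cyclic flat of $L$ if and only if $M$ has no isthmus and $N$ has no loop.
   Context: For a matroid $M$ on $S$ write $\rho_M$ for rank, $\rho(M)=\rho_M(S)$, $\nu_M(A)=|A|-\rho_M(A)$, $\lambda_M(A)=\rho(M)-\rho_M(A)$. For matroids $M$ on $S$ and $N$ on $T$ with $S\cap T=\emptyset$, the free product $M\mathbin{\Box} N$ is the matroid on $S\cup T$ whose independent sets are those $A$ with $A\cap S$ independent in $M$ and $\lambda_M(A\cap S)\geq\nu_N(A\cap T)$. A cyclic flat is a flat that is a union of circuits (equivalently a flat $F$ with $M|F$ isthmusless). *)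

theory Defs
  imports Main
begin

definition matroid :: "'a set \<Rightarrow> ('a set \<Rightarrow> bool) \<Rightarrow> bool" where
  "matroid E indep \<longleftrightarrow>
     finite E \<and>
     (\<forall>X. indep X \<longrightarrow> X \<subseteq> E) \<and>
     indep {} \<and>
     (\<forall>X Y. indep X \<and> Y \<subseteq> X \<longrightarrow> indep Y) \<and>
     (\<forall>X Y. indep X \<and> indep Y \<and> card X < card Y \<longrightarrow> (\<exists>e\<in>Y - X. indep (insert e X)))"

definition rk :: "('a set \<Rightarrow> bool) \<Rightarrow> 'a set \<Rightarrow> nat" where
  "rk indep X = Max {card I | I. I \<subseteq> X \<and> indep I}"

definition nullity :: "('a set \<Rightarrow> bool) \<Rightarrow> 'a set \<Rightarrow> int" where
  "nullity indep A = int (card A) - int (rk indep A)"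

definition corank_gap :: "'a set \<Rightarrow> ('a set \<Rightarrow> bool) \<Rightarrow> 'a set \<Rightarrow> int" where
  "corank_gap E indep A = int (rk indep E) - int (rk indep A)"

definition free_product_indep ::
  "'a set \<Rightarrow> ('a set \<Rightarrow> bool) \<Rightarrow> 'a set \<Rightarrow> ('a set \<Rightarrow> bool) \<Rightarrow> 'a set \<Rightarrow> bool" where
  "free_product_indep S indM T indN A \<longleftrightarrow>
     A \<subseteq> S \<union> T \<and> indM (A \<inter> S) \<and>
     corank_gap S indM (A \<inter> S) \<ge> nullity indN (A \<inter> T)"

definition circuit :: "'a set \<Rightarrow> ('a set \<Rightarrow> bool) \<Rightarrow> 'a set \<Rightarrow> bool" where
  "circuit E indep C \<longleftrightarrow> C \<subseteq> E \<and> \<not> indep C \<and> (\<forall>D. D \<subset> C \<longrightarrow> indep D)"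

definition flat :: "'a set \<Rightarrow> ('a set \<Rightarrow> bool) \<Rightarrow> 'a set \<Rightarrow> bool" where
  "flat E indep F \<longleftrightarrow> F \<subseteq> E \<and> (\<forall>e \<in> E - F. rk indep (insert e F) > rk indep F)"

definition cyclic_flat :: "'a set \<Rightarrow> ('a set \<Rightarrow> bool) \<Rightarrow> 'a set \<Rightarrow> bool" where
  "cyclic_flat E indep F \<longleftrightarrow> flat E indep F \<and>
     (\<exists>\<C>. (\<forall>C\<in>\<C>. circuit E indep C) \<and> F = \<Union>\<C>)"

definition isthmus :: "'a set \<Rightarrow> ('a set \<Rightarrow> bool) \<Rightarrow> 'a \<Rightarrow> bool" where
  "isthmus E indep e \<longleftrightarrow> e \<in> E \<and> (\<forall>C. circuit E indep C \<longrightarrow> e \<notin> C)"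

definition loop :: "'a set \<Rightarrow> ('a set \<Rightarrow> bool) \<Rightarrow> 'a \<Rightarrow> bool" where
  "loop E indep e \<longleftrightarrow> e \<in> E \<and> circuit E indep {e}"

end

theory Submission
  imports Defs
begin

(* The rank function of L = M \<box> N is
     rk_L X = min (rk_M (X \<inter> S) + |X \<inter> T|) (rk M + rk_N (X \<inter> T)),
   and a maximal independent subset of any X already attains it, which also gives the
   augmentation axiom for L. Cyclic flats are described by rank alone: adding an element
   raises the rank, removing one does not lower it. On subsets of S the rank of L is rk_M,
   and on S \<union> Q with Q \<subseteq> T it is rk M + rk_N Q. If a cyclic flat of L contains some t \<in> T,
   removing t keeps its rank only if the second term of the minimum is the active one, and
   then no element of S can raise the rank, so the flat contains S. For S \<union> Q the
   conditions at elements of T are exactly those making Q a cyclic flat of N, and removing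
   e \<in> S keeps the rank unless e is an isthmus of M and Q is independent in N; Q = {}
   gives the statement about S itself. *)

lemma cyclic_flat_subset_ground: "cyclic_flat E ind A \<Longrightarrow> A \<subseteq> E"
  unfolding cyclic_flat_def flat_def by blast

(* Enough for rk to behave; the free product is first shown to be an independence system
   so that its rank can be computed before it is known to be a matroid. *)
locale indep_system =
  fixes E :: "'a set" and ind :: "'a set \<Rightarrow> bool"
  assumes finite_ground: "finite E"
    and indep_subset_ground: "ind I \<Longrightarrow> I \<subseteq> E"
    and indep_empty: "ind {}"

context indep_system
begin

lemma indep_finite: "ind I \<Longrightarrow> finite I"
  using finite_ground indep_subset_ground by (meson finite_subset)

lemma finite_indep_cards: "finite {card I | I. I \<subseteq> X \<and> ind I}"
proof -
  have "{card I | I. I \<subseteq> X \<and> ind I} \<subseteq> {..card E}"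
    using finite_ground indep_subset_ground by (auto intro: card_mono)
  then show ?thesis
    using finite_subset by blast
qed

lemma card_le_rk: "ind I \<Longrightarrow> I \<subseteq> X \<Longrightarrow> card I \<le> rk ind X"
  unfolding rk_def by (rule Max_ge[OF finite_indep_cards]) auto

lemma obtain_rk_basis:
  obtains I where "I \<subseteq> X" "ind I" "card I = rk ind X"
proof -
  have "{card I | I. I \<subseteq> X \<and> ind I} \<noteq> {}"
    using indep_empty by auto
  then have "rk ind X \<in> {card I | I. I \<subseteq> X \<and> ind I}"
    unfolding rk_def by (rule Max_in[OF finite_indep_cards])
  then show ?thesis
    using that by auto
qed

lemma rk_le_card: "finite X \<Longrightarrow> rk ind X \<le> card X"
  by (metis card_mono obtain_rk_basis)

lemma rk_mono: "X \<subseteq> Y \<Longrightarrow> rk ind X \<le> rk ind Y"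
  by (metis obtain_rk_basis card_le_rk order_trans)

lemma rk_le_rk_ground: "rk ind X \<le> rk ind E"
  by (metis obtain_rk_basis card_le_rk indep_subset_ground)

lemma rk_indep: "ind X \<Longrightarrow> rk ind X = card X"
  by (metis card_le_rk indep_finite obtain_rk_basis card_mono le_antisym order_refl)

lemma rk_empty: "rk ind {} = 0"
  using rk_le_card by fastforce

lemma rk_eq_card_iff_indep: "finite X \<Longrightarrow> rk ind X = card X \<longleftrightarrow> ind X"
  by (metis obtain_rk_basis card_subset_eq rk_indep)

end

locale finite_matroid =
  fixes E :: "'a set" and ind :: "'a set \<Rightarrow> bool"
  assumes matroid: "matroid E ind"

sublocale finite_matroid \<subseteq> indep_system
  using matroid unfolding matroid_def by unfold_locales blast+

context finite_matroid
begin

lemma indep_subset: "ind X \<Longrightarrow> Y \<subseteq> X \<Longrightarrow> ind Y"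
  using matroid unfolding matroid_def by blast

lemma augment: "ind X \<Longrightarrow> ind Y \<Longrightarrow> card X < card Y \<Longrightarrow> \<exists>e\<in>Y - X. ind (insert e X)"
  using matroid unfolding matroid_def by blast

lemma rk_insert_le: "rk ind (insert e X) \<le> rk ind X + 1"
proof -
  obtain J where J: "J \<subseteq> insert e X" "ind J" "card J = rk ind (insert e X)"
    using obtain_rk_basis by blast
  have "card (J - {e}) \<le> rk ind X"
    using J indep_subset by (intro card_le_rk) auto
  moreover have "card J \<le> card (J - {e}) + 1"
    using indep_finite[OF J(2)] card_Suc_Diff1[of J e] by (cases "e \<in> J") auto
  ultimately show ?thesis
    using J(3) by linarith
qed

lemma rk_Un_le: "finite Z \<Longrightarrow> rk ind (Y \<union> Z) \<le> rk ind Y + card Z"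
proof (induction Z rule: finite_induct)
  case (insert z Z)
  have "rk ind (Y \<union> insert z Z) \<le> rk ind (Y \<union> Z) + 1"
    using rk_insert_le[of z "Y \<union> Z"] by simp
  then show ?case
    using insert by simp
qed simp

lemma nullity_mono:
  assumes "Y \<subseteq> X" "finite X"
  shows "nullity ind Y \<le> nullity ind X"
proof -
  have "X = Y \<union> (X - Y)"
    using assms(1) by blast
  then have "rk ind X \<le> rk ind Y + card (X - Y)"
    using rk_Un_le[of "X - Y" Y] assms(2) by simp
  moreover have "card X = card Y + card (X - Y)"
    using assms by (simp add: card_Diff_subset card_mono finite_subset)
  ultimately show ?thesis
    unfolding nullity_def by linarith
qed

lemma maximal_indep_card_eq_rk:
  assumes "I \<subseteq> X" "ind I" "\<forall>e\<in>X - I. \<not> ind (insert e I)"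
  shows "card I = rk ind X"
proof -
  obtain J where J: "J \<subseteq> X" "ind J" "card J = rk ind X"
    using obtain_rk_basis by blast
  have "\<not> card I < card J"
    using augment[OF assms(2) J(2)] assms(3) J(1) by blast
  moreover have "card I \<le> rk ind X"
    using card_le_rk[OF assms(2,1)] .
  ultimately show ?thesis
    using J(3) by linarith
qed

lemma indep_extend_to_maximal:
  assumes "ind I\<^sub>0" "I\<^sub>0 \<subseteq> X" "X \<subseteq> E"
  obtains I where "I\<^sub>0 \<subseteq> I" "I \<subseteq> X" "ind I" "\<forall>e\<in>X - I. \<not> ind (insert e I)"
proof -
  let ?F = "{I. I\<^sub>0 \<subseteq> I \<and> I \<subseteq> X \<and> ind I}"
  have "finite X"
    using finite_ground assms(3) by (meson finite_subset)
  moreover have "?F \<subseteq> Pow X"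
    by blast
  ultimately have "finite ?F"
    using finite_subset by blast
  moreover have "?F \<noteq> {}"
    using assms by auto
  ultimately obtain I where I: "I \<in> ?F" "\<And>J. J \<in> ?F \<Longrightarrow> I \<subseteq> J \<Longrightarrow> I = J"
    using finite_has_maximal by (metis (no_types, lifting))
  have "\<not> ind (insert e I)" if "e \<in> X - I" for e
    using I(2)[of "insert e I"] I(1) that by blast
  with I(1) show ?thesis
    using that by blast
qed

lemma rk_eq_if_rk_insert_eq:
  assumes "Y \<subseteq> X" "\<forall>e\<in>X - Y. rk ind (insert e Y) = rk ind Y"
  shows "rk ind X = rk ind Y"
proof -
  obtain K where K: "K \<subseteq> Y" "ind K" "card K = rk ind Y"
    using obtain_rk_basis by blast
  have "\<not> ind (insert e K)" if e: "e \<in> X - K" for e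
  proof
    assume "ind (insert e K)"
    moreover have "insert e K \<subseteq> insert e Y"
      using K(1) by blast
    ultimately have "card (insert e K) \<le> rk ind (insert e Y)"
      by (rule card_le_rk)
    moreover have "card (insert e K) = rk ind Y + 1"
      using e K(3) indep_finite[OF K(2)] by simp
    moreover have "rk ind (insert e Y) = rk ind Y"
      using assms(2) e by (cases "e \<in> Y") (auto simp: insert_absorb)
    ultimately show False
      by linarith
  qed
  then have "card K = rk ind X"
    using K assms(1) by (intro maximal_indep_card_eq_rk) auto
  then show ?thesis
    using K(3) by simp
qed

lemma dependent_insert_imp_circuit:
  assumes "ind I" "e \<in> E" "\<not> ind (insert e I)"
  obtains C where "circuit E ind C" "e \<in> C" "C \<subseteq> insert e I"
proof -
  let ?F = "{D. D \<subseteq> insert e I \<and> \<not> ind D}"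
  have "finite ?F"
    using indep_finite[OF assms(1)] by simp
  moreover have "?F \<noteq> {}"
    using assms(3) by blast
  ultimately obtain C where C: "C \<in> ?F" "\<And>D. D \<in> ?F \<Longrightarrow> D \<subseteq> C \<Longrightarrow> D = C"
    using finite_has_minimal by (metis (no_types, lifting))
  have "e \<in> C"
    using C(1) indep_subset[OF assms(1)] by blast
  moreover have "insert e I \<subseteq> E"
    using assms(2) indep_subset_ground[OF assms(1)] by blast
  moreover have "ind D" if "D \<subset> C" for D
    using C that by blast
  ultimately have "circuit E ind C"
    using C(1) unfolding circuit_def by blast
  with \<open>e \<in> C\<close> C(1) show ?thesis
    using that by blast
qed

lemma in_circuit_iff_rk_Diff:
  assumes "A \<subseteq> E" "e \<in> A"
  shows "(\<exists>C. circuit E ind C \<and> e \<in> C \<and> C \<subseteq> A) \<longleftrightarrow> rk ind (A - {e}) = rk ind A"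
proof
  assume "\<exists>C. circuit E ind C \<and> e \<in> C \<and> C \<subseteq> A"
  then obtain C where C: "circuit E ind C" "e \<in> C" "C \<subseteq> A"
    by blast
  have "C - {e} \<subset> C"
    using C(2) by blast
  then have "ind (C - {e})"
    using C(1) unfolding circuit_def by blast
  moreover have "C - {e} \<subseteq> A - {e}" "A - {e} \<subseteq> E"
    using C(3) assms(1) by auto
  ultimately obtain I where CI: "C - {e} \<subseteq> I"
    and I: "I \<subseteq> A - {e}" "ind I" "\<forall>f\<in>A - {e} - I. \<not> ind (insert f I)"
    by (rule indep_extend_to_maximal)
  have "C \<subseteq> insert e I"
    using CI by blast
  then have "\<not> ind (insert e I)"
    using C(1) indep_subset[of "insert e I" C] unfolding circuit_def by blast
  then have "\<forall>f\<in>A - I. \<not> ind (insert f I)"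
    using I(3) by blast
  then have "card I = rk ind A"
    using I(1,2) by (intro maximal_indep_card_eq_rk) auto
  moreover have "card I = rk ind (A - {e})"
    using I by (intro maximal_indep_card_eq_rk) auto
  ultimately show "rk ind (A - {e}) = rk ind A"
    by simp
next
  assume rk_eq: "rk ind (A - {e}) = rk ind A"
  obtain I where I: "I \<subseteq> A - {e}" "ind I" "card I = rk ind (A - {e})"
    using obtain_rk_basis by blast
  have "\<not> ind (insert e I)"
  proof
    assume "ind (insert e I)"
    then have "card (insert e I) \<le> rk ind A"
      using I(1) assms(2) by (intro card_le_rk) auto
    moreover have "card (insert e I) = card I + 1"
      using I(1) indep_finite[OF I(2)] by (simp add: subset_Diff_insert)
    ultimately show False
      using I(3) rk_eq by linarith
  qed
  moreover have "e \<in> E"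
    using assms by blast
  ultimately obtain C where "circuit E ind C" "e \<in> C" "C \<subseteq> insert e I"
    using dependent_insert_imp_circuit[OF I(2)] by blast
  then show "\<exists>C. circuit E ind C \<and> e \<in> C \<and> C \<subseteq> A"
    using I(1) assms(2) by blast
qed

lemma cyclic_flat_iff_rk:
  "cyclic_flat E ind A \<longleftrightarrow> A \<subseteq> E \<and> (\<forall>e\<in>E - A. rk ind A < rk ind (insert e A))
      \<and> (\<forall>e\<in>A. rk ind (A - {e}) = rk ind A)"
proof -
  have "(\<exists>\<C>. (\<forall>C\<in>\<C>. circuit E ind C) \<and> A = \<Union>\<C>) \<longleftrightarrow>
        (\<forall>e\<in>A. \<exists>C. circuit E ind C \<and> e \<in> C \<and> C \<subseteq> A)"
  proof
    assume "\<forall>e\<in>A. \<exists>C. circuit E ind C \<and> e \<in> C \<and> C \<subseteq> A"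
    then show "\<exists>\<C>. (\<forall>C\<in>\<C>. circuit E ind C) \<and> A = \<Union>\<C>"
      by (intro exI[of _ "{C. circuit E ind C \<and> C \<subseteq> A}"]) blast
  qed blast
  then show ?thesis
    unfolding cyclic_flat_def flat_def using in_circuit_iff_rk_Diff by blast
qed

lemma loop_iff_rk: "loop E ind e \<longleftrightarrow> e \<in> E \<and> rk ind {e} = 0"
proof -
  have "circuit E ind {e} \<longleftrightarrow> e \<in> E \<and> \<not> ind {e}"
    using indep_empty unfolding circuit_def by (auto simp: subset_singleton_iff)
  moreover have "rk ind {e} = 0 \<longleftrightarrow> \<not> ind {e}"
    using rk_eq_card_iff_indep[of "{e}"] rk_le_card[of "{e}"] by auto
  ultimately show ?thesis
    unfolding loop_def by blast
qed

lemma isthmus_iff_rk: "isthmus E ind e \<longleftrightarrow> e \<in> E \<and> rk ind (E - {e}) \<noteq> rk ind E"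
  unfolding isthmus_def using in_circuit_iff_rk_Diff[OF order_refl, of e]
  by (auto simp: circuit_def)

lemma cyclic_flat_empty_iff: "cyclic_flat E ind {} \<longleftrightarrow> (\<nexists>e. loop E ind e)"
  unfolding cyclic_flat_iff_rk loop_iff_rk by (auto simp: rk_empty)

lemma cyclic_flat_nonempty_dependent: "cyclic_flat E ind A \<Longrightarrow> A \<noteq> {} \<Longrightarrow> \<not> ind A"
  unfolding cyclic_flat_def circuit_def using indep_subset by blast

lemma rk_le_rk_Diff_add_iff:
  "(\<forall>e\<in>E. rk ind E \<le> rk ind (E - {e}) + k) \<longleftrightarrow> 0 < k \<or> (\<nexists>e. isthmus E ind e)"
proof -
  have bounds: "rk ind (E - {e}) \<le> rk ind E" "rk ind E \<le> rk ind (E - {e}) + 1" if "e \<in> E" for e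
    using rk_mono[of "E - {e}" E] rk_insert_le[of e "E - {e}"] that by (auto simp: insert_absorb)
  show ?thesis
  proof (cases "k = 0")
    case True
    have "rk ind E \<le> rk ind (E - {e}) \<longleftrightarrow> \<not> isthmus E ind e" if "e \<in> E" for e
      using bounds[OF that] that unfolding isthmus_iff_rk by linarith
    with True show ?thesis
      using isthmus_iff_rk by auto
  next
    case False
    then show ?thesis
      using bounds(2) by fastforce
  qed
qed

end

locale disjoint_matroids =
  M: finite_matroid S indM + N: finite_matroid T indN
  for S T :: "'a set" and indM indN :: "'a set \<Rightarrow> bool" +
  assumes disjoint: "S \<inter> T = {}"
begin

abbreviation indL :: "'a set \<Rightarrow> bool" where
  "indL \<equiv> free_product_indep S indM T indN"

lemma free_product_indep_system: "indep_system (S \<union> T) indL"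
  using M.finite_ground N.finite_ground M.indep_empty
  by unfold_locales (auto simp: free_product_indep_def corank_gap_def nullity_def M.rk_empty N.rk_empty)

sublocale L: indep_system "S \<union> T" indL
  by (rule free_product_indep_system)

lemma free_product_indep_card:
  assumes "indL I"
  shows "card I = card (I \<inter> S) + card (I \<inter> T)"
proof -
  have "I = (I \<inter> S) \<union> (I \<inter> T)"
    using assms unfolding free_product_indep_def by blast
  then show ?thesis
    using L.indep_finite[OF assms] disjoint card_Un_disjoint[of "I \<inter> S" "I \<inter> T"] by auto
qed

lemma free_product_indep_card_le:
  assumes "indL I" "I \<subseteq> X"
  shows "card I \<le> min (rk indM (X \<inter> S) + card (X \<inter> T)) (rk indM S + rk indN (X \<inter> T))"
proof -
  have I: "I \<subseteq> S \<union> T" "indM (I \<inter> S)" "nullity indN (I \<inter> T) \<le> corank_gap S indM (I \<inter> S)"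
    using assms(1) unfolding free_product_indep_def by auto
  have "card I = card (I \<inter> S) + card (I \<inter> T)"
    using assms(1) by (rule free_product_indep_card)
  moreover have "card (I \<inter> S) = rk indM (I \<inter> S)"
    using M.rk_indep[OF I(2)] by simp
  moreover have "rk indM (I \<inter> S) \<le> rk indM (X \<inter> S)"
    using assms(2) by (intro M.rk_mono) auto
  moreover have "card (I \<inter> T) \<le> card (X \<inter> T)"
    using assms(2) N.finite_ground by (intro card_mono) auto
  moreover have "rk indN (I \<inter> T) \<le> rk indN (X \<inter> T)"
    using assms(2) by (intro N.rk_mono) auto
  ultimately show ?thesis
    using I(3) unfolding nullity_def corank_gap_def by linarith
qed

(* The witness: bases of X \<inter> S in M and of X \<inter> T in N, plus as many further elements of
   X \<inter> T as the corank rk M - rk_M (X \<inter> S) allows. *)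
lemma obtain_free_product_indep:
  obtains I where "I \<subseteq> X" "indL I"
    "card I = min (rk indM (X \<inter> S) + card (X \<inter> T)) (rk indM S + rk indN (X \<inter> T))"
proof -
  obtain P where P: "P \<subseteq> X \<inter> S" "indM P" "card P = rk indM (X \<inter> S)"
    using M.obtain_rk_basis by blast
  obtain K where K: "K \<subseteq> X \<inter> T" "indN K" "card K = rk indN (X \<inter> T)"
    using N.obtain_rk_basis by blast
  define k where "k = min (rk indM S - rk indM (X \<inter> S)) (card (X \<inter> T - K))"
  obtain D where D: "D \<subseteq> X \<inter> T - K" "card D = k"
    using obtain_subset_with_card_n[of k "X \<inter> T - K"] unfolding k_def by auto
  have fin: "finite (X \<inter> T)" "finite K" "finite D"
    using N.finite_ground D(1) N.indep_finite[OF K(2)] by (auto intro: finite_subset)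
  have card_KD: "card (K \<union> D) = card K + card D"
    using D(1) fin by (intro card_Un_disjoint) auto
  have "card K \<le> rk indN (K \<union> D)" "rk indN (K \<union> D) \<le> rk indN (X \<inter> T)"
    using K(1,2) D(1) by (auto intro: N.card_le_rk N.rk_mono)
  then have rk_KD: "rk indN (K \<union> D) = card K"
    using K(3) by linarith
  have cards: "card (X \<inter> T - K) = card (X \<inter> T) - card K" "card K \<le> card (X \<inter> T)"
    "rk indM (X \<inter> S) \<le> rk indM S"
    using K(1) fin by (auto simp: card_Diff_subset card_mono M.rk_mono)
  define I where "I = P \<union> (K \<union> D)"
  have I_S: "I \<inter> S = P" and I_T: "I \<inter> T = K \<union> D"
    unfolding I_def using P(1) K(1) D(1) disjoint by auto
  have "indL I"
    unfolding free_product_indep_def nullity_def corank_gap_def I_S I_T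
    using P K D I_def card_KD rk_KD M.rk_indep[OF P(2)] k_def cards(3) by (auto simp: of_nat_diff)
  moreover have "card I = card P + card (K \<union> D)"
    unfolding I_def using P(1) K(1) D(1) fin disjoint M.indep_finite[OF P(2)]
    by (intro card_Un_disjoint) auto
  moreover have "I \<subseteq> X"
    unfolding I_def using P(1) K(1) D(1) by auto
  moreover have "card P + card (K \<union> D) =
      min (rk indM (X \<inter> S) + card (X \<inter> T)) (rk indM S + rk indN (X \<inter> T))"
    using P(3) K(3) card_KD cards D(2) unfolding k_def by (auto simp: min_def)
  ultimately show ?thesis
    using that by simp
qed

lemma rk_free_product:
  "rk indL X = min (rk indM (X \<inter> S) + card (X \<inter> T)) (rk indM S + rk indN (X \<inter> T))"
proof (rule antisym)
  obtain I where "I \<subseteq> X" "indL I" "card I = rk indL X"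
    using L.obtain_rk_basis by blast
  then show "rk indL X \<le> min (rk indM (X \<inter> S) + card (X \<inter> T)) (rk indM S + rk indN (X \<inter> T))"
    using free_product_indep_card_le by metis
next
  obtain I where "I \<subseteq> X" "indL I"
    "card I = min (rk indM (X \<inter> S) + card (X \<inter> T)) (rk indM S + rk indN (X \<inter> T))"
    by (rule obtain_free_product_indep)
  then show "min (rk indM (X \<inter> S) + card (X \<inter> T)) (rk indM S + rk indN (X \<inter> T)) \<le> rk indL X"
    using L.card_le_rk by metis
qed

lemma free_product_indep_subset:
  assumes "indL I" "J \<subseteq> I"
  shows "indL J"
proof -
  have I: "I \<subseteq> S \<union> T" "indM (I \<inter> S)" "nullity indN (I \<inter> T) \<le> corank_gap S indM (I \<inter> S)"
    using assms(1) unfolding free_product_indep_def by auto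
  have "nullity indN (J \<inter> T) \<le> nullity indN (I \<inter> T)"
    using assms(2) N.finite_ground by (intro N.nullity_mono) auto
  moreover have "corank_gap S indM (I \<inter> S) \<le> corank_gap S indM (J \<inter> S)"
    unfolding corank_gap_def using assms(2) M.rk_mono[of "J \<inter> S" "I \<inter> S"] by auto
  moreover have "indM (J \<inter> S)"
    by (rule M.indep_subset[OF I(2)]) (use assms(2) in blast)
  moreover have "J \<subseteq> S \<union> T"
    using I(1) assms(2) by blast
  ultimately show ?thesis
    unfolding free_product_indep_def using I(3) by linarith
qed

lemma free_product_indep_insert_S:
  assumes "indL I" "e \<in> S - I" "indM (insert e (I \<inter> S))"
    and "nullity indN (I \<inter> T) < corank_gap S indM (I \<inter> S)"
  shows "indL (insert e I)"
proof -
  have parts: "insert e I \<inter> S = insert e (I \<inter> S)" "insert e I \<inter> T = I \<inter> T"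
    using assms(2) disjoint by auto
  have "indM (I \<inter> S)"
    using M.indep_subset[OF assms(3)] by blast
  then have "rk indM (insert e (I \<inter> S)) = rk indM (I \<inter> S) + 1"
    using M.rk_indep[OF assms(3)] M.rk_indep assms(2) M.indep_finite by simp
  then have "nullity indN (I \<inter> T) \<le> corank_gap S indM (insert e (I \<inter> S))"
    using assms(4) unfolding corank_gap_def by linarith
  moreover have "insert e I \<subseteq> S \<union> T"
    using assms(1,2) unfolding free_product_indep_def by blast
  ultimately show ?thesis
    using assms(3) by (simp add: free_product_indep_def parts)
qed

lemma free_product_indep_insert_T:
  assumes "indL I" "e \<in> T" "nullity indN (insert e (I \<inter> T)) \<le> corank_gap S indM (I \<inter> S)"
  shows "indL (insert e I)"
proof -
  have parts: "insert e I \<inter> S = I \<inter> S" "insert e I \<inter> T = insert e (I \<inter> T)"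
    using assms(2) disjoint by auto
  have "insert e I \<subseteq> S \<union> T"
    using assms(1,2) unfolding free_product_indep_def by blast
  then show ?thesis
    using assms(1,3) by (simp add: free_product_indep_def parts)
qed

lemma maximal_free_product_indep_rk_le_slack:
  assumes "I \<subseteq> X" "indL I" "\<forall>e\<in>X - I. \<not> indL (insert e I)"
    and slack: "nullity indN (I \<inter> T) < corank_gap S indM (I \<inter> S)"
  shows "rk indL X \<le> card I"
proof -
  have "indM (I \<inter> S)"
    using assms(2) unfolding free_product_indep_def by blast
  moreover have "\<not> indM (insert e (I \<inter> S))" if "e \<in> X \<inter> S - I \<inter> S" for e
    using free_product_indep_insert_S[OF assms(2) _ _ slack] assms(3) that by blast
  ultimately have "card (I \<inter> S) = rk indM (X \<inter> S)"
    using assms(1) by (intro M.maximal_indep_card_eq_rk) auto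
  moreover have "X \<inter> T \<subseteq> I"
  proof
    fix e assume e: "e \<in> X \<inter> T"
    show "e \<in> I"
    proof (rule ccontr)
      assume "e \<notin> I"
      have "rk indN (I \<inter> T) \<le> rk indN (insert e (I \<inter> T))"
        by (rule N.rk_mono) blast
      moreover have "card (insert e (I \<inter> T)) = card (I \<inter> T) + 1"
        using \<open>e \<notin> I\<close> N.finite_ground by simp
      ultimately have "nullity indN (insert e (I \<inter> T)) \<le> corank_gap S indM (I \<inter> S)"
        using slack unfolding nullity_def by linarith
      then have "indL (insert e I)"
        using free_product_indep_insert_T[OF assms(2)] e by blast
      then show False
        using assms(3) e \<open>e \<notin> I\<close> by blast
    qed
  qed
  then have "X \<inter> T = I \<inter> T"
    using assms(1) by blast
  moreover have "card I = card (I \<inter> S) + card (I \<inter> T)"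
    using assms(2) by (rule free_product_indep_card)
  ultimately show ?thesis
    unfolding rk_free_product by simp
qed

lemma maximal_free_product_indep_rk_le_tight:
  assumes "I \<subseteq> X" "indL I" "\<forall>e\<in>X - I. \<not> indL (insert e I)"
    and tight: "nullity indN (I \<inter> T) = corank_gap S indM (I \<inter> S)"
  shows "rk indL X \<le> card I"
proof -
  have "rk indN (insert e (I \<inter> T)) = rk indN (I \<inter> T)" if e: "e \<in> X \<inter> T - I \<inter> T" for e
  proof (rule ccontr)
    assume "rk indN (insert e (I \<inter> T)) \<noteq> rk indN (I \<inter> T)"
    moreover have "rk indN (I \<inter> T) \<le> rk indN (insert e (I \<inter> T))"
      by (rule N.rk_mono) blast
    moreover have "e \<notin> I \<inter> T"
      using e by blast
    then have "card (insert e (I \<inter> T)) = card (I \<inter> T) + 1"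
      using N.finite_ground by simp
    ultimately have "nullity indN (insert e (I \<inter> T)) \<le> corank_gap S indM (I \<inter> S)"
      using tight N.rk_insert_le[of e "I \<inter> T"] unfolding nullity_def by linarith
    then have "indL (insert e I)"
      using free_product_indep_insert_T[OF assms(2)] e by blast
    then show False
      using assms(3) e by blast
  qed
  then have "rk indN (X \<inter> T) = rk indN (I \<inter> T)"
    using assms(1) by (intro N.rk_eq_if_rk_insert_eq) auto
  moreover have "card (I \<inter> S) = rk indM (I \<inter> S)"
    using assms(2) M.rk_indep unfolding free_product_indep_def by auto
  moreover have "card I = card (I \<inter> S) + card (I \<inter> T)"
    using assms(2) by (rule free_product_indep_card)
  ultimately show ?thesis
    using tight unfolding rk_free_product nullity_def corank_gap_def by linarith
qed

lemma maximal_free_product_indep_rk_le: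
  assumes "I \<subseteq> X" "indL I" "\<forall>e\<in>X - I. \<not> indL (insert e I)"
  shows "rk indL X \<le> card I"
proof -
  have "nullity indN (I \<inter> T) \<le> corank_gap S indM (I \<inter> S)"
    using assms(2) unfolding free_product_indep_def by blast
  then consider "nullity indN (I \<inter> T) < corank_gap S indM (I \<inter> S)"
    | "nullity indN (I \<inter> T) = corank_gap S indM (I \<inter> S)"
    by linarith
  then show ?thesis
  proof cases
    case 1
    with assms show ?thesis
      by (rule maximal_free_product_indep_rk_le_slack)
  next
    case 2
    with assms show ?thesis
      by (rule maximal_free_product_indep_rk_le_tight)
  qed
qed

lemma free_product_matroid: "matroid (S \<union> T) indL"
proof -
  have "\<exists>e\<in>J - I. indL (insert e I)" if "indL I" "indL J" "card I < card J" for I J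
  proof (rule ccontr)
    assume "\<not> (\<exists>e\<in>J - I. indL (insert e I))"
    then have "rk indL (I \<union> J) \<le> card I"
      using that(1) by (intro maximal_free_product_indep_rk_le) auto
    moreover have "card J \<le> rk indL (I \<union> J)"
      using that(2) by (rule L.card_le_rk) blast
    ultimately show False
      using that(3) by linarith
  qed
  moreover have "\<forall>X Y. indL X \<and> Y \<subseteq> X \<longrightarrow> indL Y"
    using free_product_indep_subset by blast
  ultimately show ?thesis
    unfolding matroid_def using L.finite_ground L.indep_subset_ground L.indep_empty by blast
qed

sublocale L: finite_matroid "S \<union> T" indL
  by unfold_locales (rule free_product_matroid)

lemma rk_free_product_subset_S: "X \<subseteq> S \<Longrightarrow> rk indL X = rk indM X"
proof -
  assume "X \<subseteq> S"
  then have "X \<inter> S = X" "X \<inter> T = {}"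
    using disjoint by auto
  then show ?thesis
    unfolding rk_free_product using M.rk_le_rk_ground[of X] by (simp add: N.rk_empty)
qed

lemma rk_free_product_Un_S: "Q \<subseteq> T \<Longrightarrow> rk indL (S \<union> Q) = rk indM S + rk indN Q"
proof -
  assume "Q \<subseteq> T"
  then have "(S \<union> Q) \<inter> S = S" "(S \<union> Q) \<inter> T = Q"
    using disjoint by auto
  moreover have "rk indN Q \<le> card Q"
    using \<open>Q \<subseteq> T\<close> N.finite_ground by (intro N.rk_le_card) (rule finite_subset)
  ultimately show ?thesis
    unfolding rk_free_product by simp
qed

lemma cyclic_flat_free_product_subset_S:
  assumes "A \<subseteq> S" "A \<noteq> S"
  shows "cyclic_flat (S \<union> T) indL A \<longleftrightarrow> cyclic_flat S indM A"
proof -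
  have rk_A: "rk indL X = rk indM X" if "X \<subseteq> A" for X
    using that assms(1) by (intro rk_free_product_subset_S) blast
  have rk_insert_S: "rk indL (insert e A) = rk indM (insert e A)" if "e \<in> S" for e
    using that assms(1) by (intro rk_free_product_subset_S) blast
  have rk_insert_T: "rk indL (insert t A) = min (rk indM A + 1) (rk indM S + rk indN {t})"
    if "t \<in> T" for t
  proof -
    have "insert t A \<inter> S = A" "insert t A \<inter> T = {t}"
      using that assms(1) disjoint by auto
    then show ?thesis
      unfolding rk_free_product by simp
  qed
  have "rk indM A < rk indM S" if "\<forall>e\<in>S - A. rk indM A < rk indM (insert e A)"
  proof -
    obtain e where "e \<in> S - A"
      using assms by blast
    then have "rk indM A < rk indM (insert e A)"
      using that by blast
    then show ?thesis
      using M.rk_le_rk_ground[of "insert e A"] by linarith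
  qed
  then show ?thesis
    unfolding L.cyclic_flat_iff_rk M.cyclic_flat_iff_rk
    using assms(1) rk_A rk_insert_S rk_insert_T by (auto simp: Ball_def)
qed

lemma cyclic_flat_free_product_contains_S:
  assumes cf: "cyclic_flat (S \<union> T) indL A" and t: "t \<in> A \<inter> T"
  shows "S \<subseteq> A"
proof
  have fin: "finite (A \<inter> T)"
    using N.finite_ground by simp
  have "(A - {t}) \<inter> S = A \<inter> S" "(A - {t}) \<inter> T = A \<inter> T - {t}"
    using t disjoint by auto
  then have "rk indL (A - {t}) \<le> rk indM (A \<inter> S) + (card (A \<inter> T) - 1)"
    unfolding rk_free_product using t fin by simp
  moreover have "rk indL (A - {t}) = rk indL A"
    using cf t unfolding L.cyclic_flat_iff_rk by blast
  moreover have "0 < card (A \<inter> T)"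
    using t fin card_gt_0_iff by blast
  ultimately have rk_A: "rk indL A = rk indM S + rk indN (A \<inter> T)"
    unfolding rk_free_product by linarith
  fix e assume "e \<in> S"
  show "e \<in> A"
  proof (rule ccontr)
    assume "e \<notin> A"
    then have "rk indL A < rk indL (insert e A)"
      using cf \<open>e \<in> S\<close> unfolding L.cyclic_flat_iff_rk by blast
    moreover have "insert e A \<inter> T = A \<inter> T"
      using \<open>e \<in> S\<close> disjoint by auto
    then have "rk indL (insert e A) \<le> rk indM S + rk indN (A \<inter> T)"
      unfolding rk_free_product by simp
    ultimately show False
      using rk_A by linarith
  qed
qed

lemma cyclic_flat_free_product_Un_S:
  assumes "Q \<subseteq> T"
  shows "cyclic_flat (S \<union> T) indL (S \<union> Q) \<longleftrightarrow>
    cyclic_flat T indN Q \<and> (\<not> indN Q \<or> (\<nexists>e. isthmus S indM e))"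
proof -
  have fin: "finite Q"
    using assms N.finite_ground finite_subset by blast
  have "rk indL (insert e (S \<union> Q)) = rk indM S + rk indN (insert e Q)" if "e \<in> T" for e
  proof -
    have "insert e (S \<union> Q) = S \<union> insert e Q"
      by blast
    then show ?thesis
      using rk_free_product_Un_S[of "insert e Q"] that assms by simp
  qed
  moreover have "(S \<union> T) - (S \<union> Q) = T - Q"
    using disjoint by blast
  ultimately have flat:
    "(\<forall>e\<in>(S \<union> T) - (S \<union> Q). rk indL (S \<union> Q) < rk indL (insert e (S \<union> Q)))
      \<longleftrightarrow> (\<forall>e\<in>T - Q. rk indN Q < rk indN (insert e Q))"
    unfolding rk_free_product_Un_S[OF assms] by simp
  have cyclic_Q: "rk indL ((S \<union> Q) - {e}) = rk indL (S \<union> Q) \<longleftrightarrow> rk indN (Q - {e}) = rk indN Q"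
    if "e \<in> Q" for e
  proof -
    have "(S \<union> Q) - {e} = S \<union> (Q - {e})"
      using that assms disjoint by blast
    moreover have "Q - {e} \<subseteq> T"
      using assms by blast
    ultimately show ?thesis
      using assms by (simp add: rk_free_product_Un_S)
  qed
  have cyclic_S: "rk indL ((S \<union> Q) - {e}) = rk indL (S \<union> Q) \<longleftrightarrow>
      rk indM S \<le> rk indM (S - {e}) + (card Q - rk indN Q)" if "e \<in> S" for e
  proof -
    have "((S \<union> Q) - {e}) \<inter> S = S - {e}" "((S \<union> Q) - {e}) \<inter> T = Q"
      using that assms disjoint by auto
    then have "rk indL ((S \<union> Q) - {e}) = min (rk indM (S - {e}) + card Q) (rk indM S + rk indN Q)"
      unfolding rk_free_product by (simp only:)
    moreover have "rk indN Q \<le> card Q"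
      using fin by (rule N.rk_le_card)
    ultimately show ?thesis
      unfolding rk_free_product_Un_S[OF assms] min_def by auto
  qed
  have "0 < card Q - rk indN Q \<longleftrightarrow> \<not> indN Q"
    using N.rk_eq_card_iff_indep[OF fin] N.rk_le_card[OF fin] by linarith
  then have cyclic_S': "(\<forall>e\<in>S. rk indL ((S \<union> Q) - {e}) = rk indL (S \<union> Q)) \<longleftrightarrow>
      \<not> indN Q \<or> (\<nexists>e. isthmus S indM e)"
    using cyclic_S M.rk_le_rk_Diff_add_iff[of "card Q - rk indN Q"] by simp
  have cyclic_Q': "(\<forall>e\<in>Q. rk indL ((S \<union> Q) - {e}) = rk indL (S \<union> Q)) \<longleftrightarrow>
      (\<forall>e\<in>Q. rk indN (Q - {e}) = rk indN Q)"
    using cyclic_Q by simp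
  have "S \<union> Q \<subseteq> S \<union> T"
    using assms by blast
  then show ?thesis
    unfolding L.cyclic_flat_iff_rk N.cyclic_flat_iff_rk flat ball_Un cyclic_S' cyclic_Q'
    using assms by blast
qed

lemma cyclic_flat_free_product_meets_T:
  assumes "A \<subseteq> S \<union> T" "\<not> A \<subseteq> S"
  shows "cyclic_flat (S \<union> T) indL A \<longleftrightarrow> (\<exists>B. B \<noteq> {} \<and> cyclic_flat T indN B \<and> A = S \<union> B)"
proof
  obtain t where t: "t \<in> A \<inter> T"
    using assms by blast
  assume cf: "cyclic_flat (S \<union> T) indL A"
  define Q where "Q = A \<inter> T"
  have "A = S \<union> Q" "Q \<subseteq> T" "Q \<noteq> {}"
    using cyclic_flat_free_product_contains_S[OF cf t] assms(1) t unfolding Q_def by blast+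
  then show "\<exists>B. B \<noteq> {} \<and> cyclic_flat T indN B \<and> A = S \<union> B"
    using cf cyclic_flat_free_product_Un_S[of Q] by auto
next
  assume "\<exists>B. B \<noteq> {} \<and> cyclic_flat T indN B \<and> A = S \<union> B"
  then obtain B where B: "B \<noteq> {}" "cyclic_flat T indN B" "A = S \<union> B"
    by blast
  then show "cyclic_flat (S \<union> T) indL A"
    using cyclic_flat_free_product_Un_S[OF cyclic_flat_subset_ground[OF B(2)]]
      N.cyclic_flat_nonempty_dependent[OF B(2,1)] by simp
qed

lemma cyclic_flat_free_product_iff:
  assumes "A \<subseteq> S \<union> T" "A \<noteq> S"
  shows "cyclic_flat (S \<union> T) indL A \<longleftrightarrow>
    (A \<subseteq> S \<and> cyclic_flat S indM A) \<or> (\<exists>B. B \<noteq> {} \<and> cyclic_flat T indN B \<and> A = S \<union> B)"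
proof (cases "A \<subseteq> S")
  case True
  have "\<not> (B \<noteq> {} \<and> cyclic_flat T indN B \<and> A = S \<union> B)" for B
    using True cyclic_flat_subset_ground[of T indN B] disjoint by blast
  then show ?thesis
    using cyclic_flat_free_product_subset_S[OF True assms(2)] True by blast
next
  case False
  then show ?thesis
    using cyclic_flat_free_product_meets_T[OF assms(1)] by blast
qed

lemma cyclic_flat_free_product_S_iff:
  "cyclic_flat (S \<union> T) indL S \<longleftrightarrow> (\<nexists>e. isthmus S indM e) \<and> (\<nexists>e. loop T indN e)"
  using cyclic_flat_free_product_Un_S[of "{}"] N.cyclic_flat_empty_iff N.indep_empty by auto

end

theorem proposition6p1:
  fixes S T :: "'a set" and indM indN :: "'a set \<Rightarrow> bool"
  assumes "matroid S indM" and "matroid T indN" and "S \<inter> T = {}"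
  defines "indL \<equiv> free_product_indep S indM T indN"
  shows "(\<forall>A. A \<subseteq> S \<union> T \<and> A \<noteq> S \<longrightarrow>
            (cyclic_flat (S \<union> T) indL A \<longleftrightarrow>
              (A \<subseteq> S \<and> cyclic_flat S indM A) \<or>
              (\<exists>B. B \<noteq> {} \<and> cyclic_flat T indN B \<and> A = S \<union> B)))
       \<and> (cyclic_flat (S \<union> T) indL S \<longleftrightarrow>
            (\<nexists>e. isthmus S indM e) \<and> (\<nexists>e. loop T indN e))"
proof -
  interpret disjoint_matroids S T indM indN
    by unfold_locales (fact assms)+
  show ?thesis
    unfolding indL_def using cyclic_flat_free_product_iff cyclic_flat_free_product_S_iff by blast
qed

end
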